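(* Let $h(\cdot,\theta)=[h_1(\cdot,\theta),\dots,h_q(\cdot,\theta)]^T:\mathbb{R}^p\to\mathbb{R}^q$ be twice continuously differentiable in $x$ (for a fixed parameter $\theta$). For each $r\in\{1,\dots,q\}$ let $$s_r:=\sup_{x\in\mathbb{R}^p}\|\nabla^2_x h_r(x,\theta)\|_2,$$ and assume $0<s_r<\infty$. Fix $0<c<1$ and define $$\mathcal{S}_r:=\{x\in\mathbb{R}^p:\ \|\nabla^2_x h_r(x,\theta)\|_2>c\cdot s_r\},\qquad r\in\{1,\dots,q\}.$$ Suppose that $\mu\left(\bigcup_{r=1}^q\mathcal{S}_r\right)<C$ for some finite constant $C$, where $\mu$ is Lebesgue measure on $\mathbb{R}^p$. Then for every $\epsilon>0$ there exists a probability distribution $\mathcal{P}$ on $\mathbb{R}^p$ such that $$\sup_{x\in\mathbb{R}^p}\left\|\mathbb{E}_{\eta\sim\mathcal{P}}\,\nabla^2_x h_r(x+\eta,\theta)\right\|_2<(c+\epsilon)\cdot s_r\qquad\text{for all } r\in\{1,\dots,q\}.$$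
   Context: $h$ represents a single neural network layer with parameters $\theta$; $\nabla^2_x h_r(x,\theta)\in\mathbb{R}^{p\times p}$ is the Hessian of the $r$-th output coordinate with respect to the input $x$, and $\|\cdot\|_2$ on matrices is the spectral (operator) norm. The expectation of the Hessian is taken entrywise over a random perturbation $\eta$ of the input drawn from $\mathcal{P}$. *)

theory Defs
  imports "HOL-Analysis.Analysis" "HOL-Probability.Probability"
begin

definition grad :: "(real^'p \<Rightarrow> real) \<Rightarrow> real^'p \<Rightarrow> real^'p" where
  "grad f x = (\<chi> i. frechet_derivative f (at x) (axis i 1))"

definition hess :: "(real^'p \<Rightarrow> real) \<Rightarrow> real^'p \<Rightarrow> real^'p^'p" where
  "hess f x = (\<chi> i j. frechet_derivative (\<lambda>y. grad f y $ i) (at x) (axis j 1))"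

definition C2 :: "(real^'p \<Rightarrow> real) \<Rightarrow> bool" where
  "C2 f \<longleftrightarrow> (\<forall>x. f differentiable (at x))
      \<and> (\<forall>x i. (\<lambda>y. grad f y $ i) differentiable (at x))
      \<and> continuous_on UNIV (hess f)"

definition spec_norm :: "real^'n^'m \<Rightarrow> real" where
  "spec_norm A = onorm (\<lambda>v. A *v v)"

end

theory Submission
  imports Defs
begin

text \<open>Since the spectral norm is convex, averaging cannot increase it:
  \<open>\<parallel>E H(x + \<eta>)\<parallel> \<le> E \<parallel>H(x + \<eta>)\<parallel> \<le> c s + (1 - c) s P(x + \<eta> \<in> U)\<close>, where
  \<open>U = \<Union>\<^sub>r S\<^sub>r\<close>, because \<open>\<parallel>H\<parallel> \<le> s\<close> everywhere and \<open>\<parallel>H\<parallel> \<le> c s\<close> off \<open>U\<close>.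
  For \<open>P\<close> uniform on a cube of volume \<open>V\<close>, translation invariance of Lebesgue measure
  bounds that probability by \<open>\<mu>(U) / V\<close>, uniformly in \<open>x\<close>, and a large cube makes it small.\<close>

lemma norm_matrix_vector_mult_le_spec_norm: "norm (A *v v) \<le> spec_norm A * norm v"
  unfolding spec_norm_def by (rule onorm[OF matrix_vector_mul_bounded_linear])

lemma spec_norm_le: "(\<And>v. norm (A *v v) \<le> b * norm v) \<Longrightarrow> spec_norm A \<le> b"
  unfolding spec_norm_def by (rule onorm_le)

lemma spec_norm_nonneg: "0 \<le> spec_norm A"
  unfolding spec_norm_def by (rule onorm_pos_le[OF matrix_vector_mul_bounded_linear])

lemma abs_matrix_entry_le_spec_norm: "\<bar>A $ i $ j\<bar> \<le> spec_norm A"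
  unfolding spec_norm_def by (rule matrix_component_le_onorm)

lemma spec_norm_triangle: "spec_norm (A + B) \<le> spec_norm A + spec_norm B"
  unfolding spec_norm_def matrix_vector_mult_add_rdistrib
  by (intro onorm_triangle matrix_vector_mul_bounded_linear)

lemma spec_norm_le_norm: "spec_norm (A :: real^'n^'m) \<le> real CARD('m) * real CARD('n) * norm A"
  unfolding spec_norm_def
  by (rule onorm_le_matrix_component)
    (rule order_trans[OF component_le_norm_cart Finite_Cartesian_Product.norm_nth_le])

lemma bounded_linear_matrix_vector_mult_left: "bounded_linear (\<lambda>A::real^'n^'m. A *v v)"
  unfolding linear_conv_bounded_linear[symmetric]
  by (rule linearI)
    (auto simp: vec_eq_iff matrix_vector_mult_def sum_distrib_left algebra_simps sum.distrib)

lemma lipschitz_on_spec_norm: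
  "(real CARD('m) * real CARD('n))-lipschitz_on S (spec_norm :: real^'n^'m \<Rightarrow> real)"
proof (rule lipschitz_onI)
  fix A B :: "real^'n^'m"
  have "spec_norm A \<le> spec_norm B + spec_norm (A - B)"
    and "spec_norm B \<le> spec_norm A + spec_norm (B - A)"
    using spec_norm_triangle[of B "A - B"] spec_norm_triangle[of A "B - A"] by simp_all
  then show "dist (spec_norm A) (spec_norm B) \<le> real CARD('m) * real CARD('n) * dist A B"
    using spec_norm_le_norm[of "A - B"] spec_norm_le_norm[of "B - A"]
    by (simp add: dist_real_def dist_norm norm_minus_commute abs_le_iff)
qed simp

lemma continuous_on_spec_norm: "continuous_on S spec_norm"
  by (rule lipschitz_on_continuous_on[OF lipschitz_on_spec_norm])

lemma matrix_vector_mult_integral: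
  fixes F :: "'a \<Rightarrow> real^'n^'m"
  assumes "integrable M (\<lambda>x. F x *v v)" and "\<And>i j. integrable M (\<lambda>x. F x $ i $ j)"
  shows "(\<chi> i j. \<integral>x. F x $ i $ j \<partial>M) *v v = (\<integral>x. F x *v v \<partial>M)"
proof -
  have "(\<integral>x. F x *v v \<partial>M) $ i = (\<integral>x. (F x *v v) $ i \<partial>M)" for i
    by (rule integral_bounded_linear[OF bounded_linear_vec_nth assms(1), symmetric])
  then show ?thesis
    using assms(2) by (simp add: vec_eq_iff matrix_vector_mult_def)
qed

lemma spec_norm_integral_le:
  fixes F :: "'a \<Rightarrow> real^'n^'m"
  assumes F: "F \<in> borel_measurable M" and int: "integrable M (\<lambda>x. spec_norm (F x))"
  shows "spec_norm (\<chi> i j. \<integral>x. F x $ i $ j \<partial>M) \<le> (\<integral>x. spec_norm (F x) \<partial>M)"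
proof (rule spec_norm_le)
  fix v :: "real^'n"
  have entries: "integrable M (\<lambda>x. F x $ i $ j)" for i j
    by (rule Bochner_Integration.integrable_bound[OF int])
       (auto intro!: measurable_compose[OF F] borel_measurable_continuous_onI continuous_intros
          order_trans[OF abs_matrix_entry_le_spec_norm abs_ge_self])
  have Fv: "integrable M (\<lambda>x. F x *v v)"
    by (rule Bochner_Integration.integrable_bound[OF integrable_mult_left[OF int, of "norm v"]])
       (auto intro!: measurable_compose[OF F] borel_measurable_continuous_onI linear_continuous_on
          bounded_linear_matrix_vector_mult_left
          order_trans[OF norm_matrix_vector_mult_le_spec_norm abs_ge_self])
  have "norm ((\<chi> i j. \<integral>x. F x $ i $ j \<partial>M) *v v) \<le> (\<integral>x. norm (F x *v v) \<partial>M)"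
    unfolding matrix_vector_mult_integral[OF Fv entries] by (rule integral_norm_bound)
  also have "\<dots> \<le> (\<integral>x. spec_norm (F x) * norm v \<partial>M)"
    using int Fv by (intro integral_mono) (auto intro!: norm_matrix_vector_mult_le_spec_norm)
  finally show "norm ((\<chi> i j. \<integral>x. F x $ i $ j \<partial>M) *v v)
      \<le> (\<integral>x. spec_norm (F x) \<partial>M) * norm v"
    by simp
qed

lemma (in prob_space) integral_le_off_event:
  fixes f :: "'a \<Rightarrow> real"
  assumes "integrable M f" "A \<in> events"
    and "\<And>x. x \<in> space M \<Longrightarrow> f x \<le> a" "\<And>x. x \<in> space M - A \<Longrightarrow> f x \<le> b"
  shows "(\<integral>x. f x \<partial>M) \<le> b + (a - b) * prob A"
proof -
  have "(\<integral>x. f x \<partial>M) \<le> (\<integral>x. b + (a - b) * indicator A x \<partial>M)"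
    using assms by (intro integral_mono) (auto split: split_indicator simp: less_top[symmetric])
  also have "\<dots> = b + (a - b) * prob A"
    using assms(2)
    by (subst Bochner_Integration.integral_add) (auto simp: less_top[symmetric] prob_space)
  finally show ?thesis .
qed

lemma emeasure_lborel_translate:
  fixes U :: "'a::euclidean_space set"
  assumes "U \<in> sets borel"
  shows "emeasure lborel ((\<lambda>y. x + y) -` U) = emeasure lborel U"
proof -
  have "emeasure lborel ((\<lambda>y. x + y) -` U) = emeasure (distr lborel borel ((+) x)) U"
    using assms by (subst emeasure_distr) auto
  then show ?thesis by (simp add: lborel_distr_plus)
qed

lemma emeasure_lborel_cube:
  fixes L :: real
  assumes "0 \<le> L"
  shows "emeasure lborel (cbox 0 (L *\<^sub>R One) :: 'a::euclidean_space set) = ennreal (L ^ DIM('a))"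
  using assms by (simp add: emeasure_lborel_cbox_eq inner_sum_left inner_Basis)

lemma exists_prob_space_small_translates:
  fixes U :: "'a::euclidean_space set"
  assumes U: "U \<in> sets borel" "emeasure lborel U < \<infinity>" and \<epsilon>: "0 < \<epsilon>"
  shows "\<exists>P. prob_space P \<and> sets P = sets borel \<and> (\<forall>x. measure P ((\<lambda>y. x + y) -` U) \<le> \<epsilon>)"
proof -
  define m where "m = measure lborel U"
  define L where "L = 1 + m / \<epsilon>"
  define B where "B = (cbox 0 (L *\<^sub>R One) :: 'a set)"
  have L: "1 \<le> L" "m \<le> \<epsilon> * L"
    using \<epsilon> by (auto simp: L_def m_def field_simps)
  have LV: "L \<le> L ^ DIM('a)"
    using L(1) by (simp add: self_le_power)
  have B: "emeasure lborel B = ennreal (L ^ DIM('a))"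
    unfolding B_def using L(1) by (intro emeasure_lborel_cube) simp
  define P where "P = uniform_measure lborel B"
  have "prob_space P"
    unfolding P_def using B L(1) by (intro prob_space_uniform_measure) auto
  moreover have "sets P = sets borel"
    by (simp add: P_def)
  moreover have "measure P ((\<lambda>y. x + y) -` U) \<le> \<epsilon>" for x
  proof -
    let ?A = "(\<lambda>y. x + y) -` U"
    have "?A \<in> sets borel"
      using measurable_sets[OF _ U(1), of "(+) x" borel] by simp
    then have A: "?A \<in> fmeasurable lborel" and mA: "measure lborel ?A = m"
      using U by (auto simp: fmeasurable_def m_def measure_def emeasure_lborel_translate)
    have "measure P ?A = measure lborel (B \<inter> ?A) / L ^ DIM('a)"
      unfolding P_def using A B L(1) by (subst measure_uniform_measure) (auto simp: measure_def)
    also have "\<dots> \<le> m / L ^ DIM('a)"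
      unfolding mA[symmetric] using A L(1)
      by (intro divide_right_mono measure_mono_fmeasurable) (auto simp: B_def)
    also have "\<dots> \<le> m / L"
      using L LV by (intro divide_left_mono) (auto simp: m_def)
    also have "\<dots> \<le> \<epsilon>"
      using L by (simp add: divide_le_eq mult.commute)
    finally show ?thesis .
  qed
  ultimately show ?thesis by blast
qed

lemma spec_norm_translate_average_le:
  fixes F :: "'a::euclidean_space \<Rightarrow> real^'n^'m"
  assumes P: "prob_space P" "sets P = sets borel"
    and F: "F \<in> borel_measurable borel" and U: "U \<in> sets borel"
    and le_a: "\<And>y. spec_norm (F y) \<le> a" and le_b: "\<And>y. y \<notin> U \<Longrightarrow> spec_norm (F y) \<le> b"
  shows "spec_norm (\<chi> i j. \<integral>\<eta>. F (x + \<eta>) $ i $ j \<partial>P)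
           \<le> b + (a - b) * measure P ((\<lambda>\<eta>. x + \<eta>) -` U)"
proof -
  interpret prob_space P by (fact P(1))
  have Fx: "(\<lambda>\<eta>. F (x + \<eta>)) \<in> borel_measurable P"
    unfolding measurable_cong_sets[OF P(2) refl] using F by measurable
  have int: "integrable P (\<lambda>\<eta>. spec_norm (F (x + \<eta>)))"
    by (rule integrable_const_bound[where B = a])
       (auto intro!: le_a measurable_compose[OF Fx] borel_measurable_continuous_onI
          continuous_on_spec_norm simp: spec_norm_nonneg)
  have "(\<lambda>\<eta>. x + \<eta>) -` U \<in> events"
    using measurable_sets[OF _ U, of "(+) x" borel] P(2) by simp
  then have "(\<integral>\<eta>. spec_norm (F (x + \<eta>)) \<partial>P) \<le> b + (a - b) * prob ((\<lambda>\<eta>. x + \<eta>) -` U)"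
    using int le_a le_b by (intro integral_le_off_event) auto
  then show ?thesis
    using spec_norm_integral_le[OF Fx int] by linarith
qed

theorem theorem4p2:
  fixes h :: "real^'p \<Rightarrow> real^'q" and c :: real and s :: "'q \<Rightarrow> real"
    and S :: "'q \<Rightarrow> (real^'p) set"
  assumes C2: "\<And>r. C2 (\<lambda>x. h x $ r)"
    and bdd: "\<And>r. bdd_above (range (\<lambda>x. spec_norm (hess (\<lambda>y. h y $ r) x)))"
    and s_def: "\<And>r. s r = (SUP x. spec_norm (hess (\<lambda>y. h y $ r) x))"
    and s_pos: "\<And>r. 0 < s r"
    and c: "0 < c" "c < 1"
    and S_def: "\<And>r. S r = {x. spec_norm (hess (\<lambda>y. h y $ r) x) > c * s r}"
    and meas: "\<exists>C::real. emeasure lborel (\<Union>r. S r) < ennreal C"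
  shows "\<forall>\<epsilon>>0. \<exists>P :: (real^'p) measure. prob_space P \<and> sets P = sets borel \<and>
           (\<forall>r. (SUP x. spec_norm (\<chi> i j. \<integral>\<eta>. hess (\<lambda>y. h y $ r) (x + \<eta>) $ i $ j \<partial>P))
                  < (c + \<epsilon>) * s r)"
proof (intro allI impI)
  fix \<epsilon> :: real assume "0 < \<epsilon>"
  define H where "H r = hess (\<lambda>y. h y $ r)" for r
  define U where "U = (\<Union>r. S r)"
  have H: "continuous_on UNIV (H r)" for r
    using C2 by (simp add: C2_def H_def)
  have "open U"
    unfolding U_def S_def H_def[symmetric]
    by (intro open_UN ballI open_Collect_less continuous_on_const
        continuous_on_compose2[OF continuous_on_spec_norm H]) auto
  moreover have "emeasure lborel U < \<infinity>"
    using meas by (auto simp: U_def intro: less_trans)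
  ultimately obtain P where P: "prob_space P" "sets P = sets borel"
    and small: "\<And>x. measure P ((\<lambda>y. x + y) -` U) \<le> \<epsilon> / 2"
    using exists_prob_space_small_translates[of U "\<epsilon> / 2"] \<open>0 < \<epsilon>\<close> by auto
  have bound: "spec_norm (\<chi> i j. \<integral>\<eta>. H r (x + \<eta>) $ i $ j \<partial>P) \<le> c * s r + s r * (\<epsilon> / 2)" for r x
  proof -
    have "spec_norm (\<chi> i j. \<integral>\<eta>. H r (x + \<eta>) $ i $ j \<partial>P)
        \<le> c * s r + (s r - c * s r) * measure P ((\<lambda>\<eta>. x + \<eta>) -` U)"
      using \<open>open U\<close> bdd by (intro spec_norm_translate_average_le[OF P] borel_measurable_continuous_onI H)
        (auto simp: s_def H_def U_def S_def not_less intro: cSUP_upper)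
    also have "\<dots> \<le> c * s r + s r * (\<epsilon> / 2)"
      using small[of x] c s_pos[of r] by (intro add_left_mono mult_mono) auto
    finally show ?thesis .
  qed
  show "\<exists>P. prob_space P \<and> sets P = sets borel \<and>
           (\<forall>r. (SUP x. spec_norm (\<chi> i j. \<integral>\<eta>. hess (\<lambda>y. h y $ r) (x + \<eta>) $ i $ j \<partial>P))
                  < (c + \<epsilon>) * s r)"
  proof (intro exI conjI allI)
    fix r
    have "(SUP x. spec_norm (\<chi> i j. \<integral>\<eta>. H r (x + \<eta>) $ i $ j \<partial>P)) \<le> c * s r + s r * (\<epsilon> / 2)"
      by (rule cSUP_least) (simp, rule bound)
    also have "\<dots> < (c + \<epsilon>) * s r"
      using \<open>0 < \<epsilon>\<close> s_pos[of r] by (simp add: algebra_simps)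
    finally show "(SUP x. spec_norm (\<chi> i j. \<integral>\<eta>. hess (\<lambda>y. h y $ r) (x + \<eta>) $ i $ j \<partial>P))
                  < (c + \<epsilon>) * s r"
      by (simp add: H_def)
  qed (fact P)+
qed

end
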